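(* Setting: integers $N,Q,S\ge1$, $1\le M\le N$, $J\ge1$; $\mathbf{H}\in\mathbb{R}^{Q\times N}\setminus\{\mathbf{0}\}$, $\mathbf{y}\in\mathbb{R}^Q$, a real matrix $\mathbf{V}_0$ with $N$ columns, and for $s\in\{1,\dots,S\}$: $P_s\ge1$, $\mathbf{V}_s\in\mathbb{R}^{P_s\times N}$, $\mathbf{c}_s\in\mathbb{R}^{P_s}$; $\Phi:\mathbb{R}^Q\to\mathbb{R}$; functions $\psi_{s,\delta}:\mathbb{R}\to\mathbb{R}$ for $\delta>0$; $F_\delta(\mathbf{x})=\Phi(\mathbf{H}\mathbf{x}-\mathbf{y})+\sum_{s=1}^S\psi_{s,\delta}(\|\mathbf{V}_s\mathbf{x}-\mathbf{c}_s\|)+\|\mathbf{V}_0\mathbf{x}\|^2$. Assume: (A1i) $\Phi$ is continuous and coercive; (A1ii) for every $\delta>0$ and $s$, $\psi_{s,\delta}$ is continuous and nonnegative; (A1iii) $\operatorname{Ker}\mathbf{H}\cap\operatorname{Ker}\mathbf{V}_0=\{\mathbf{0}\}$. Fix $\delta>0$ and assume: (A3i) $\Phi$ is differentiable with $L$-Lipschitz gradient; (A3ii) each $\psi_{s,\delta}$ is differentiable; (A3iii) each $t\mapsto\psi_{s,\delta}(\sqrt t)$ is concave on $[0,+\infty)$; (A3iv) for each $s$ there is $\overline\omega_s\in[0,+\infty)$ with $0\le\dot\psi_{s,\delta}(t)\le\overline\omega_s t$ for all $t>0$, and $\lim_{t\to0}\dot\psi_{s,\delta}(t)/t\in\mathbb{R}$.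 Let $\omega_{s,\delta}(t)=\dot\psi_{s,\delta}(t)/t$, extended by continuity at $0$, fix $\mu\in[L,+\infty)$ and set $\mathbf{A}(\mathbf{x})=\mu\mathbf{H}^\top\mathbf{H}+2\mathbf{V}_0^\top\mathbf{V}_0+\mathbf{V}^\top\operatorname{Diag}\{\mathbf{b}(\mathbf{x})\}\mathbf{V}$, where $\mathbf{V}=[\mathbf{V}_1^\top|\cdots|\mathbf{V}_S^\top]^\top$ and $b_{P_1+\dots+P_{s-1}+p}(\mathbf{x})=\omega_{s,\delta}(\|\mathbf{V}_s\mathbf{x}-\mathbf{c}_s\|)$ for $p\in\{1,\dots,P_s\}$. Consider the iteration: $\mathbf{x}_0\in\mathbb{R}^N$; for each $k\in\mathbb{N}$, given any matrix $\mathbf{D}_k\in\mathbb{R}^{N\times M}$, set $\mathbf{u}_k^0=\mathbf{0}$ and for $j=1,\dots,J$: $\mathbf{B}_k^{j-1}=\mathbf{D}_k^\top\mathbf{A}(\mathbf{x}_k+\mathbf{D}_k\mathbf{u}_k^{j-1})\mathbf{D}_k$, $\mathbf{u}_k^j=\mathbf{u}_k^{j-1}-(\mathbf{B}_k^{j-1})^{\dagger}\mathbf{D}_k^\top\nabla F_\delta(\mathbf{x}_k+\mathbf{D}_k\mathbf{u}_k^{j-1})$ (pseudo-inverse $\dagger$); then $\mathbf{x}_{k+1}=\mathbf{x}_k+\mathbf{D}_k\mathbf{u}_k^J$. Write $\mathbf{x}_k^j=\mathbf{x}_k+\mathbf{D}_k\mathbf{u}_k^j$ and $\mathbf{g}_k^j=\nabla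 F_\delta(\mathbf{x}_k^j)$. Claim: for every $k\in\mathbb{N}$ and $j\in\{0,\dots,J-1\}$, $$\eta\|\mathbf{x}_k^{j+1}-\mathbf{x}_k^j\|\le\|\mathbf{g}_k^j\|,$$ where $\eta>0$ is the smallest eigenvalue of $\mu\mathbf{H}^\top\mathbf{H}+2\mathbf{V}_0^\top\mathbf{V}_0$.
   Context: $\|\cdot\|$ is the Euclidean norm; $\dot\psi_{s,\delta}$ is the derivative of $\psi_{s,\delta}$. *)

theory Defs
  imports "HOL-Analysis.Analysis"
begin

definition grad :: "('a::real_inner \<Rightarrow> real) \<Rightarrow> 'a \<Rightarrow> 'a" where
  "grad f x = (THE g. (f has_derivative (\<lambda>h. g \<bullet> h)) (at x))"

definition pinv :: "real^'b^'a \<Rightarrow> real^'a^'b" where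
  "pinv A = (THE X. A ** X ** A = A \<and> X ** A ** X = X \<and>
                    transpose (A ** X) = A ** X \<and> transpose (X ** A) = X ** A)"

definition diag_mat :: "real^'p \<Rightarrow> real^'p^'p" where
  "diag_mat b = (\<chi> i j. if i = j then b $ i else 0)"

text \<open>The stacked matrix V = [V_1; ...; V_S] is given as a single matrix with rows indexed by 'p,
  together with a block labelling blk : 'p -> {1..S}; V_s consists of the rows i with blk i = s,
  and c_s of the corresponding entries of c. blocknorm gives ||V_s x - c_s||.\<close>
definition blocknorm :: "real^'n^'p \<Rightarrow> real^'p \<Rightarrow> ('p \<Rightarrow> nat) \<Rightarrow> real^'n \<Rightarrow> nat \<Rightarrow> real" where
  "blocknorm V c blk x s = sqrt (\<Sum>i\<in>{i. blk i = s}. ((V *v x - c) $ i)^2)"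

definition Fobj :: "(real^'q \<Rightarrow> real) \<Rightarrow> real^'n^'q \<Rightarrow> real^'q \<Rightarrow> real^'n^'r \<Rightarrow>
    real^'n^'p \<Rightarrow> real^'p \<Rightarrow> ('p \<Rightarrow> nat) \<Rightarrow> nat \<Rightarrow> (nat \<Rightarrow> real \<Rightarrow> real) \<Rightarrow> real^'n \<Rightarrow> real" where
  "Fobj Phi H y V0 V c blk S psid x =
     Phi (H *v x - y) + (\<Sum>s=1..S. psid s (blocknorm V c blk x s)) + (norm (V0 *v x))^2"

definition omega :: "(real \<Rightarrow> real) \<Rightarrow> real \<Rightarrow> real" where
  "omega f t = (if t = 0 then Lim (at_right 0) (\<lambda>r. deriv f r / r) else deriv f t / t)"

definition Amat :: "real \<Rightarrow> real^'n^'q \<Rightarrow> real^'n^'r \<Rightarrow> real^'n^'p \<Rightarrow> real^'p \<Rightarrow> ('p \<Rightarrow> nat) \<Rightarrow>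
    (nat \<Rightarrow> real \<Rightarrow> real) \<Rightarrow> real^'n \<Rightarrow> real^'n^'n" where
  "Amat mu H V0 V c blk psid x =
     mu *\<^sub>R (transpose H ** H) + 2 *\<^sub>R (transpose V0 ** V0)
     + transpose V ** diag_mat (\<chi> i. omega (psid (blk i)) (blocknorm V c blk x (blk i))) ** V"

end

theory Submission imports Defs begin

text \<open>Write \<open>A0 = \<mu> H\<^sup>T H + 2 V0\<^sup>T V0\<close>, \<open>A = A(x\<^sub>k\<^sup>j)\<close> and \<open>B = D\<^sup>T A D\<close>. The weights \<open>\<omega>\<close> are
  nonnegative, so \<open>A \<ge> A0 \<ge> \<eta> I\<close> as quadratic forms. The step is \<open>d = D B\<^sup>\<dagger> D\<^sup>T g\<close>, and for the
  symmetric matrix \<open>B\<close> the Penrose identities give \<open>d\<^sup>T A d = (B\<^sup>\<dagger> w)\<^sup>T B (B\<^sup>\<dagger> w) = w\<^sup>T B\<^sup>\<dagger> w = d\<^sup>T g\<close>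
  with \<open>w = D\<^sup>T g\<close>. Hence \<open>\<eta> \<parallel>d\<parallel>\<^sup>2 \<le> d\<^sup>T A d = d\<^sup>T g \<le> \<parallel>d\<parallel> \<parallel>g\<parallel>\<close> by Cauchy-Schwarz.\<close>

lemma matrix_add_rdistrib: "((A::real^'b^'a) + B) ** C = A ** C + B ** C"
  by (simp add: matrix_eq matrix_vector_mul_assoc[symmetric] matrix_vector_mult_add_rdistrib)

lemma matrix_diff_rdistrib: "((A::real^'b^'a) - B) ** C = A ** C - B ** C"
  by (simp add: matrix_eq matrix_vector_mul_assoc[symmetric] matrix_vector_mult_diff_rdistrib)

lemma matrix_diff_ldistrib: "(C::real^'b^'a) ** (A - B) = C ** A - C ** B"
  by (simp add: matrix_eq matrix_vector_mul_assoc[symmetric] matrix_vector_mult_diff_distrib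
      matrix_vector_mult_diff_rdistrib)

lemma transpose_add: "transpose ((A::real^'b^'a) + B) = transpose A + transpose B"
  by (simp add: vec_eq_iff transpose_def)

lemma transpose_diff: "transpose ((A::real^'b^'a) - B) = transpose A - transpose B"
  by (simp add: vec_eq_iff transpose_def)

lemma transpose_zero [simp]: "transpose (0::real^'b^'a) = 0"
  by (simp add: vec_eq_iff transpose_def)

lemma inner_transpose_matrix_vector: "(x::real^'a) \<bullet> (transpose M *v y) = (M *v x) \<bullet> y"
  by (metis dot_lmul_matrix inner_commute transpose_matrix_vector)

lemma matrix_eqI: "(\<And>v. (A::real^'b^'a) *v v = B *v v) \<Longrightarrow> A = B"
  by (simp add: matrix_eq)

definition is_pinv :: "real^'b^'a \<Rightarrow> real^'a^'b \<Rightarrow> bool" where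
  "is_pinv A X \<longleftrightarrow> A ** X ** A = A \<and> X ** A ** X = X \<and>
                   transpose (A ** X) = A ** X \<and> transpose (X ** A) = X ** A"

lemma is_pinv_unique:
  assumes X: "is_pinv A X" and Y: "is_pinv A Y"
  shows "X = Y"
proof -
  from X have x1: "A ** X ** A = A" and x2: "X ** A ** X = X" and x3: "transpose (A ** X) = A ** X"
    and x4: "transpose (X ** A) = X ** A" by (auto simp: is_pinv_def)
  from Y have y1: "A ** Y ** A = A" and y2: "Y ** A ** Y = Y" and y3: "transpose (A ** Y) = A ** Y"
    and y4: "transpose (Y ** A) = Y ** A" by (auto simp: is_pinv_def)
  have "X = X ** transpose (A ** X)" using x2 x3 by (simp add: matrix_mul_assoc)
  also have "\<dots> = X ** transpose (A ** Y ** A ** X)" using y1 by simp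
  also have "\<dots> = X ** transpose (A ** X) ** transpose (A ** Y)"
    by (simp add: matrix_transpose_mul matrix_mul_assoc)
  also have "\<dots> = X ** A ** Y" using x2 x3 y3 by (simp add: matrix_mul_assoc)
  finally have XY: "X = X ** A ** Y" .
  have "Y = transpose (Y ** A) ** Y" using y2 y4 by simp
  also have "\<dots> = transpose (Y ** (A ** X ** A)) ** Y" using x1 by simp
  also have "\<dots> = transpose (X ** A) ** transpose (Y ** A) ** Y"
    by (simp add: matrix_transpose_mul matrix_mul_assoc)
  also have "\<dots> = X ** A ** (Y ** A ** Y)" using x4 y4 by (simp add: matrix_mul_assoc)
  finally show ?thesis using XY y2 by simp
qed

lemma pinv_eqI: "is_pinv A X \<Longrightarrow> pinv A = X"
  unfolding pinv_def by (rule the_equality) (auto simp: is_pinv_def intro: is_pinv_unique)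

text \<open>The orthogonal projector onto the kernel of a symmetric \<open>B\<close> makes \<open>B + P\<close> invertible,
  and \<open>(B + P)\<^sup>-\<^sup>1 - P\<close> is the pseudo-inverse.\<close>

lemma kernel_projector_exists:
  fixes B :: "real^'a^'a"
  shows "\<exists>P. transpose P = P \<and> P ** P = P \<and> B ** P = 0 \<and> (\<forall>v. B *v v = 0 \<longrightarrow> P *v v = v)"
proof -
  define K where "K = {v::real^'a. B *v v = 0}"
  have "subspace K" unfolding K_def subspace_def
    by (simp add: matrix_vector_right_distrib matrix_vector_mult_scaleR)
  then obtain Bs where Bs: "Bs \<subseteq> K" "pairwise orthogonal Bs" "\<And>x. x \<in> Bs \<Longrightarrow> norm x = 1"
    "independent Bs" "span Bs = K"
    by (metis orthonormal_basis_subspace)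
  have fin: "finite Bs" using Bs(4) independent_imp_finite by blast
  define P :: "real^'a^'a" where "P = (\<chi> i j. \<Sum>b\<in>Bs. b$i * b$j)"
  have Pv: "P *v v = (\<Sum>b\<in>Bs. (v \<bullet> b) *\<^sub>R b)" for v
    unfolding P_def
    by (simp add: vec_eq_iff matrix_vector_mult_def inner_vec_def sum_component sum_distrib_left
        sum_distrib_right sum.swap[of _ Bs] mult_ac)
  have PK: "P *v v \<in> K" for v
    unfolding Pv using Bs(1,5) by (metis (no_types, lifting) span_base span_scale span_sum)
  have PKid: "v \<in> K \<Longrightarrow> P *v v = v" for v
    unfolding Pv using orthonormal_basis_expand[OF Bs(2,3) _ fin] Bs(5) by auto
  have "transpose P = P" unfolding P_def by (simp add: vec_eq_iff transpose_def mult.commute)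
  moreover have "P ** P = P"
    by (rule matrix_eqI) (use PK PKid in \<open>simp add: matrix_vector_mul_assoc[symmetric]\<close>)
  moreover have "B ** P = 0"
    by (rule matrix_eqI) (use PK in \<open>simp add: matrix_vector_mul_assoc[symmetric] K_def\<close>)
  ultimately show ?thesis using PKid K_def by blast
qed

lemma is_pinv_symmetric_exists:
  fixes B :: "real^'a^'a"
  assumes sym: "transpose B = B"
  shows "\<exists>X. is_pinv B X"
proof -
  obtain P where Psym: "transpose P = P" and PP: "P ** P = P" and BP: "B ** P = 0"
    and Pker: "\<And>v. B *v v = 0 \<Longrightarrow> P *v v = v"
    using kernel_projector_exists[of B] by blast
  have PB: "P ** B = 0"
    using BP by (metis Psym matrix_transpose_mul sym transpose_zero)
  have "v = 0" if "(B + P) *v v = 0" for v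
  proof -
    have "P *v v = P *v ((B + P) *v v)"
      by (simp add: matrix_vector_mul_assoc matrix_add_ldistrib PB PP)
    with that have "P *v v = 0" by simp
    with that have "B *v v = 0" by (simp add: matrix_vector_mult_add_rdistrib)
    with Pker \<open>P *v v = 0\<close> show "v = 0" by simp
  qed
  then obtain C where CBP: "C ** (B + P) = mat 1"
    using matrix_left_invertible_ker[of "B + P"] by blast
  then have BPC: "(B + P) ** C = mat 1" using matrix_left_right_inverse by blast
  have PC: "P ** C = P"
    using arg_cong[OF BPC, of "\<lambda>M. P ** M"]
    by (simp add: matrix_mul_assoc matrix_add_ldistrib PB PP)
  have CP: "C ** P = P"
    using arg_cong[OF CBP, of "\<lambda>M. M ** P"]
    by (simp add: matrix_mul_assoc[symmetric] matrix_add_rdistrib BP PP)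
  define X where "X = C - P"
  have BX: "B ** X = mat 1 - P"
    using BPC by (simp add: X_def matrix_diff_ldistrib matrix_add_rdistrib PC BP algebra_simps)
  have XB: "X ** B = mat 1 - P"
    using CBP by (simp add: X_def matrix_diff_rdistrib matrix_add_ldistrib CP PB algebra_simps)
  have "is_pinv B X" unfolding is_pinv_def
    by (simp add: BX XB matrix_diff_rdistrib matrix_diff_ldistrib transpose_diff PB PP PC Psym
        X_def[symmetric] flip: matrix_mul_assoc) (simp add: X_def matrix_diff_ldistrib PP PC)
  then show ?thesis ..
qed

lemma pinv_symmetric:
  fixes B :: "real^'a^'a"
  assumes sym: "transpose B = B"
  shows "is_pinv B (pinv B)" and "transpose (pinv B) = pinv B"
proof -
  obtain X where X: "is_pinv B X" using is_pinv_symmetric_exists[OF sym] by blast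
  then show pinv: "is_pinv B (pinv B)" using pinv_eqI[OF X] by simp
  have "is_pinv B (transpose (pinv B))"
    using pinv unfolding is_pinv_def
    by (metis matrix_transpose_mul sym transpose_transpose matrix_mul_assoc)
  then show "transpose (pinv B) = pinv B" using is_pinv_unique pinv by blast
qed

lemma quadratic_form_pinv_symmetric:
  fixes B :: "real^'a^'a"
  assumes "transpose B = B"
  shows "(pinv B *v w) \<bullet> (B *v (pinv B *v w)) = (pinv B *v w) \<bullet> w"
proof -
  let ?X = "pinv B"
  have pinv: "is_pinv B ?X" and Xsym: "transpose ?X = ?X" using pinv_symmetric[OF assms] by auto
  have "?X ** B = B ** ?X"
    using pinv Xsym assms by (metis is_pinv_def matrix_transpose_mul)
  then have "(B ** ?X) *v (?X *v w) = ?X *v w"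
    using pinv by (simp add: is_pinv_def matrix_vector_mul_assoc flip: matrix_mul_assoc)
  moreover have "(?X *v w) \<bullet> ((B ** ?X) *v w) = ((B ** ?X) *v (?X *v w)) \<bullet> w"
    using inner_transpose_matrix_vector[of "?X *v w" "B ** ?X" w] pinv
    by (simp add: is_pinv_def del: transpose_matrix_vector)
  ultimately show ?thesis by (simp add: matrix_vector_mul_assoc)
qed

lemma psd_quadratic_form_zero_imp_kernel:
  fixes C :: "real^'a^'a"
  assumes sym: "transpose C = C" and psd: "\<And>x. 0 \<le> x \<bullet> (C *v x)" and zero: "v \<bullet> (C *v v) = 0"
  shows "C *v v = 0"
proof (rule ccontr)
  define w where "w = C *v v"
  assume "C *v v \<noteq> 0"
  then have wpos: "w \<bullet> w > 0" by (simp add: w_def)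
  define K where "K = w \<bullet> (C *v w)"
  have K0: "K \<ge> 0" using psd by (simp add: K_def)
  define t where "t = (w \<bullet> w) / (K + 1)"
  have tpos: "t > 0" using wpos K0 by (simp add: t_def)
  have vw: "v \<bullet> (C *v w) = w \<bullet> w"
    using inner_transpose_matrix_vector[of v C w] sym by (simp add: w_def)
  text \<open>Moving from \<open>v\<close> a short distance along \<open>-w\<close> would make the form negative.\<close>
  have "0 \<le> (v - t *\<^sub>R w) \<bullet> (C *v (v - t *\<^sub>R w))" by (rule psd)
  also have "\<dots> = t * (t * K - 2 * (w \<bullet> w))"
    using vw zero by (simp add: matrix_vector_mult_diff_distrib matrix_vector_mult_scaleR
        inner_diff_left inner_diff_right K_def w_def inner_commute algebra_simps)
  finally have "0 \<le> t * K - 2 * (w \<bullet> w)" using tpos by (simp add: zero_le_mult_iff)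
  moreover have "t * K \<le> w \<bullet> w" using K0 wpos by (simp add: t_def field_simps)
  ultimately show False using wpos by linarith
qed

lemma quadratic_form_min_on_sphere:
  fixes A :: "real^'a^'a"
  obtains v m where "norm v = 1" "v \<bullet> (A *v v) = m" "\<And>x. m * (norm x)^2 \<le> x \<bullet> (A *v x)"
proof -
  define q where "q = (\<lambda>x::real^'a. x \<bullet> (A *v x))"
  have cont: "continuous_on (sphere 0 1) q" unfolding q_def by (intro continuous_intros)
  have "norm (axis undefined 1 :: real^'a) = 1" by simp
  then have ne: "sphere (0::real^'a) 1 \<noteq> {}" by auto
  obtain v where v: "v \<in> sphere 0 1" "\<And>y. y \<in> sphere 0 1 \<Longrightarrow> q v \<le> q y"
    using continuous_attains_inf[OF compact_sphere ne cont] by blast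
  have "q v * (norm x)^2 \<le> q x" for x
  proof (cases "x = 0")
    case False
    then have "q v \<le> q (x /\<^sub>R norm x)" using v(2) by simp
    also have "q (x /\<^sub>R norm x) = q x / (norm x)^2"
      by (simp add: q_def matrix_vector_mult_scaleR power2_eq_square divide_inverse mult_ac)
    finally show ?thesis using False by (simp add: field_simps)
  qed (simp add: q_def)
  with v(1) that show ?thesis by (simp add: q_def)
qed

text \<open>A minimiser of the Rayleigh quotient is an eigenvector.\<close>

lemma quadratic_form_ge_eigenvalue_bound:
  fixes A :: "real^'a^'a"
  assumes sym: "transpose A = A"
    and eig_ge: "\<And>l v. v \<noteq> 0 \<Longrightarrow> A *v v = l *\<^sub>R v \<Longrightarrow> \<eta> \<le> l"
  shows "\<eta> * (norm x)^2 \<le> x \<bullet> (A *v x)"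
proof -
  obtain v m where nv: "norm v = 1" and qv: "v \<bullet> (A *v v) = m"
    and qge: "\<And>x. m * (norm x)^2 \<le> x \<bullet> (A *v x)"
    using quadratic_form_min_on_sphere[of A] by blast
  define C where "C = A - m *\<^sub>R mat 1"
  have Cv: "C *v x = A *v x - m *\<^sub>R x" for x
    by (simp add: C_def matrix_vector_mult_diff_rdistrib flip: scaleR_matrix_vector_assoc)
  have "C *v v = 0"
  proof (rule psd_quadratic_form_zero_imp_kernel)
    show "transpose C = C" by (simp add: C_def transpose_diff transpose_scalar sym)
    show "0 \<le> x \<bullet> (C *v x)" for x
      using qge[of x] by (simp add: Cv inner_diff_right power2_norm_eq_inner)
    show "v \<bullet> (C *v v) = 0"
      using nv qv by (simp add: Cv inner_diff_right power2_norm_eq_inner[symmetric])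
  qed
  moreover have "v \<noteq> 0" using nv by auto
  ultimately have "\<eta> \<le> m" by (intro eig_ge[of v]) (simp_all add: Cv)
  then have "\<eta> * (norm x)^2 \<le> m * (norm x)^2" by (simp add: mult_right_mono)
  also have "\<dots> \<le> x \<bullet> (A *v x)" by (rule qge)
  finally show ?thesis .
qed

lemma quadratic_form_weighted_gram_nonneg:
  assumes "\<And>i. b $ i \<ge> 0"
  shows "0 \<le> x \<bullet> ((transpose V ** diag_mat b ** V) *v x)"
proof -
  have "x \<bullet> ((transpose V ** diag_mat b ** V) *v x) = (V *v x) \<bullet> (diag_mat b *v (V *v x))"
    by (simp add: inner_transpose_matrix_vector flip: matrix_vector_mul_assoc
        del: transpose_matrix_vector)
  also have "\<dots> = (\<Sum>i\<in>UNIV. b $ i * ((V *v x) $ i)^2)"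
    by (simp add: diag_mat_def inner_vec_def matrix_vector_mult_def power2_eq_square mult_ac
        if_distrib if_distribR cong: if_cong)
  also have "\<dots> \<ge> 0" using assms by (intro sum_nonneg) simp
  finally show ?thesis .
qed

lemma pinv_step_norm_le:
  fixes A :: "real^'n^'n" and D :: "real^'m^'n"
  assumes sym: "transpose A = A" and coercive: "\<And>x. \<eta> * (norm x)^2 \<le> x \<bullet> (A *v x)"
  shows "\<eta> * norm (D *v (pinv (transpose D ** A ** D) *v (transpose D *v g))) \<le> norm g"
proof -
  define B where "B = transpose D ** A ** D"
  have Bsym: "transpose B = B"
    by (simp add: B_def sym matrix_transpose_mul matrix_mul_assoc)
  define z where "z = pinv B *v (transpose D *v g)"
  define d where "d = D *v z"
  have "\<eta> * (norm d)^2 \<le> d \<bullet> (A *v d)" by (rule coercive)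
  also have "\<dots> = z \<bullet> (B *v z)"
    by (simp add: d_def B_def inner_transpose_matrix_vector matrix_vector_mul_assoc[symmetric]
        del: transpose_matrix_vector)
  also have "\<dots> = z \<bullet> (transpose D *v g)"
    unfolding z_def by (rule quadratic_form_pinv_symmetric[OF Bsym])
  also have "\<dots> = d \<bullet> g"
    by (simp add: d_def inner_transpose_matrix_vector del: transpose_matrix_vector)
  also have "\<dots> \<le> norm d * norm g" by (rule norm_cauchy_schwarz)
  finally have "\<eta> * (norm d)^2 \<le> norm d * norm g" .
  then have "\<eta> * norm d \<le> norm g"
    by (cases "d = 0") (auto simp: power2_eq_square mult_ac)
  then show ?thesis by (simp add: d_def z_def B_def)
qed

lemma omega_nonneg:
  fixes f :: "real \<Rightarrow> real"
  assumes t: "t \<ge> 0"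
    and deriv_nonneg: "\<And>r. r > 0 \<Longrightarrow> 0 \<le> deriv f r"
    and lim: "((\<lambda>r. deriv f r / r) \<longlongrightarrow> l) (at_right 0)"
  shows "0 \<le> omega f t"
proof (cases "t = 0")
  case True
  have "0 \<le> l"
  proof (rule tendsto_lowerbound[OF lim])
    show "\<forall>\<^sub>F r in at_right 0. 0 \<le> deriv f r / r"
      using eventually_at_right_less[of "0::real"] by eventually_elim (use deriv_nonneg in auto)
  qed simp
  with True lim show ?thesis by (simp add: omega_def tendsto_Lim)
qed (use t deriv_nonneg in \<open>simp add: omega_def\<close>)

lemma transpose_diag_mat [simp]: "transpose (diag_mat b) = diag_mat b"
  by (simp add: vec_eq_iff transpose_def diag_mat_def)

lemma Amat_symmetric:
  "transpose (Amat \<mu> H V0 V c blk psid x) = Amat \<mu> H V0 V c blk psid x"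
  by (simp add: Amat_def transpose_add transpose_scalar matrix_transpose_mul matrix_mul_assoc)

lemma quadratic_form_Amat_ge:
  assumes "\<And>i. 0 \<le> omega (psid (blk i)) (blocknorm V c blk x (blk i))"
  shows "z \<bullet> ((\<mu> *\<^sub>R (transpose H ** H) + 2 *\<^sub>R (transpose V0 ** V0)) *v z)
           \<le> z \<bullet> (Amat \<mu> H V0 V c blk psid x *v z)"
  using quadratic_form_weighted_gram_nonneg[of "\<chi> i. omega (psid (blk i)) (blocknorm V c blk x (blk i))" z V]
    assms by (simp add: Amat_def matrix_vector_mult_add_rdistrib inner_add_right)

theorem lemma4:
  fixes H :: "real^'n^'q" and y :: "real^'q" and V0 :: "real^'n^'r"
    and V :: "real^'n^'p" and c :: "real^'p" and blk :: "'p \<Rightarrow> nat"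
    and S J :: nat
    and Phi :: "real^'q \<Rightarrow> real"
    and psi :: "nat \<Rightarrow> real \<Rightarrow> real \<Rightarrow> real"
    and \<delta> L \<mu> \<eta> :: real
    and x :: "nat \<Rightarrow> real^'n" and D :: "nat \<Rightarrow> real^'m^'n" and u :: "nat \<Rightarrow> nat \<Rightarrow> real^'m"
  assumes S_pos: "S \<ge> 1" and J_pos: "J \<ge> 1"
    and M_le_N: "CARD('m) \<le> CARD('n)"
    and H_nz: "H \<noteq> 0"
    and blk_range: "\<forall>i. blk i \<in> {1..S}"
    and blk_nonempty: "\<forall>s\<in>{1..S}. \<exists>i. blk i = s"
    \<comment> \<open>(A1i)\<close>
    and Phi_cont: "continuous_on UNIV Phi"
    and Phi_coercive: "filterlim Phi at_top at_infinity"
    \<comment> \<open>(A1ii)\<close>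
    and psi_cont: "\<forall>d>0. \<forall>s\<in>{1..S}. continuous_on UNIV (psi s d)"
    and psi_nonneg: "\<forall>d>0. \<forall>s\<in>{1..S}. \<forall>t. psi s d t \<ge> 0"
    \<comment> \<open>(A1iii)\<close>
    and ker: "\<forall>z. H *v z = 0 \<and> V0 *v z = 0 \<longrightarrow> z = 0"
    \<comment> \<open>fixed delta\<close>
    and delta_pos: "\<delta> > 0"
    \<comment> \<open>(A3i)\<close>
    and Phi_diff: "\<forall>z. Phi differentiable (at z)"
    and Phi_lip: "L-lipschitz_on UNIV (grad Phi)"
    \<comment> \<open>(A3ii)\<close>
    and psi_diff: "\<forall>s\<in>{1..S}. \<forall>t. psi s \<delta> differentiable (at t)"
    \<comment> \<open>(A3iii)\<close>
    and psi_concave: "\<forall>s\<in>{1..S}. concave_on {0..} (\<lambda>t. psi s \<delta> (sqrt t))"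
    \<comment> \<open>(A3iv)\<close>
    and psi_deriv_bound: "\<forall>s\<in>{1..S}. \<exists>\<omega>\<ge>0. \<forall>t>0.
                             0 \<le> deriv (psi s \<delta>) t \<and> deriv (psi s \<delta>) t \<le> \<omega> * t"
    and psi_deriv_lim: "\<forall>s\<in>{1..S}. \<exists>l::real. ((\<lambda>t. deriv (psi s \<delta>) t / t) \<longlongrightarrow> l) (at_right 0)"
    \<comment> \<open>mu and eta\<close>
    and mu_ge: "\<mu> \<ge> L"
    and eta_eig: "\<exists>v. v \<noteq> 0 \<and> (\<mu> *\<^sub>R (transpose H ** H) + 2 *\<^sub>R (transpose V0 ** V0)) *v v = \<eta> *\<^sub>R v"
    and eta_min: "\<forall>l v. v \<noteq> 0 \<and> (\<mu> *\<^sub>R (transpose H ** H) + 2 *\<^sub>R (transpose V0 ** V0)) *v v = l *\<^sub>R v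
                         \<longrightarrow> \<eta> \<le> l"
    \<comment> \<open>the iteration\<close>
    and u0: "\<forall>k. u k 0 = 0"
    and u_step: "\<forall>k. \<forall>j\<in>{1..J}.
        u k j = u k (j - 1)
          - pinv (transpose (D k) ** Amat \<mu> H V0 V c blk (\<lambda>s. psi s \<delta>) (x k + D k *v u k (j - 1)) ** D k)
            *v (transpose (D k) *v grad (Fobj Phi H y V0 V c blk S (\<lambda>s. psi s \<delta>)) (x k + D k *v u k (j - 1)))"
    and x_step: "\<forall>k. x (Suc k) = x k + D k *v u k J"
  shows "\<forall>k. \<forall>j<J.
           \<eta> * norm ((x k + D k *v u k (Suc j)) - (x k + D k *v u k j))
             \<le> norm (grad (Fobj Phi H y V0 V c blk S (\<lambda>s. psi s \<delta>)) (x k + D k *v u k j))"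
proof (intro allI impI)
  fix k j assume "j < J"
  define xkj where "xkj = x k + D k *v u k j"
  define A where "A = Amat \<mu> H V0 V c blk (\<lambda>s. psi s \<delta>) xkj"
  define A0 where "A0 = \<mu> *\<^sub>R (transpose H ** H) + 2 *\<^sub>R (transpose V0 ** V0)"
  have "transpose A0 = A0"
    by (simp add: A0_def transpose_add transpose_scalar matrix_transpose_mul)
  then have A0_ge: "\<eta> * (norm z)^2 \<le> z \<bullet> (A0 *v z)" for z
    using eta_min by (intro quadratic_form_ge_eigenvalue_bound) (auto simp: A0_def)
  have "0 \<le> omega (psi (blk i) \<delta>) (blocknorm V c blk xkj (blk i))" for i
  proof -
    obtain l where "((\<lambda>t. deriv (psi (blk i) \<delta>) t / t) \<longlongrightarrow> l) (at_right 0)"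
      using psi_deriv_lim blk_range by blast
    then show ?thesis
      using psi_deriv_bound blk_range by (intro omega_nonneg) (auto simp: blocknorm_def sum_nonneg)
  qed
  then have "z \<bullet> (A0 *v z) \<le> z \<bullet> (A *v z)" for z
    unfolding A0_def A_def by (rule quadratic_form_Amat_ge)
  with A0_ge have "\<eta> * (norm z)^2 \<le> z \<bullet> (A *v z)" for z
    using order_trans by blast
  from pinv_step_norm_le[OF Amat_symmetric this[unfolded A_def]]
  have "\<eta> * norm (D k *v (u k j - u k (Suc j)))
      \<le> norm (grad (Fobj Phi H y V0 V c blk S (\<lambda>s. psi s \<delta>)) xkj)"
    using u_step \<open>j < J\<close> by (simp add: xkj_def)
  then show "\<eta> * norm ((x k + D k *v u k (Suc j)) - (x k + D k *v u k j))
      \<le> norm (grad (Fobj Phi H y V0 V c blk S (\<lambda>s. psi s \<delta>)) (x k + D k *v u k j))"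
    by (simp add: xkj_def matrix_vector_mult_diff_distrib norm_minus_commute)
qed

end
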